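(* Let $\alpha\in\mathbb{R}\setminus\{0\}$, let $\delta^{\star}(\alpha)=1/\alpha^2$ if $\alpha\le 2$ and $\delta^{\star}(\alpha)=\frac{1}{2\alpha}\exp\{1-\frac{\alpha}{2}\}$ if $\alpha>2$, let $|\delta|\le\delta^{\star}(\alpha)$, and let $$C(u,v)=uv+\delta\left(1-e^{\alpha(u-u^2)}\right)\left(1-e^{\alpha(v-v^2)}\right),\quad (u,v)\in[0,1]^2.$$ Then Spearman's rho $\rho_C=12\int_0^1\int_0^1 C(u,v)\,du\,dv-3$ and Gini's gamma coefficient $\gamma_C=4\left\{\int_0^1 C(u,1-u)\,du-\int_0^1(u-C(u,u))\,du\right\}$ are given by $$\rho_C=\begin{cases}12\delta\left[1-\sqrt{\frac{\pi}{|\alpha|}}\,e^{\alpha/4}\,\mathrm{erfi}\left(\frac{\sqrt{|\alpha|}}{2}\right)\right]^2,&\alpha<0,\\[2mm] 12\delta\left[1-\sqrt{\frac{\pi}{\alpha}}\,e^{\alpha/4}\,\mathrm{erf}\left(\frac{\sqrt{\alpha}}{2}\right)\right]^2,&\alpha>0,\end{cases}$$ $$\gamma_C=\begin{cases}8\delta\left[1-2\sqrt{\frac{\pi}{|\alpha|}}\,e^{\alpha/4}\,\mathrm{erfi}\left(\frac{\sqrt{|\alpha|}}{2}\right)+\sqrt{\frac{\pi}{2|\alpha|}}\,e^{\alpha/2}\,\mathrm{erfi}\left(\sqrt{\frac{|\alpha|}{2}}\right)\right],&\alpha<0,\\[2mm] 8\delta\left[1-2\sqrt{\frac{\pi}{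\alpha}}\,e^{\alpha/4}\,\mathrm{erf}\left(\frac{\sqrt{\alpha}}{2}\right)+\sqrt{\frac{\pi}{2\alpha}}\,e^{\alpha/2}\,\mathrm{erf}\left(\sqrt{\frac{\alpha}{2}}\right)\right],&\alpha>0.\end{cases}$$
   Context: $\mathrm{erf}(t)=\frac{2}{\sqrt{\pi}}\int_0^t e^{-z^2}\,dz$ is the error function and $\mathrm{erfi}(t)=\frac{2}{\sqrt{\pi}}\int_0^t e^{z^2}\,dz$ is the imaginary error function. *)

theory Defs
  imports "HOL-Analysis.Analysis"
begin

text \<open>Error function and imaginary error function (arguments used here are nonnegative;
  for t < 0 the convention integral over {0..t} = {} would be wrong, so we use the oriented form).\<close>
definition erf :: "real \<Rightarrow> real" where
  "erf t = (if 0 \<le> t then 2 / sqrt pi * integral {0..t} (\<lambda>z. exp (- z\<^sup>2))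
            else - (2 / sqrt pi * integral {t..0} (\<lambda>z. exp (- z\<^sup>2))))"

definition erfi :: "real \<Rightarrow> real" where
  "erfi t = (if 0 \<le> t then 2 / sqrt pi * integral {0..t} (\<lambda>z. exp (z\<^sup>2))
            else - (2 / sqrt pi * integral {t..0} (\<lambda>z. exp (z\<^sup>2))))"

definition delta_star :: "real \<Rightarrow> real" where
  "delta_star \<alpha> = (if \<alpha> \<le> 2 then 1 / \<alpha>\<^sup>2 else 1 / (2 * \<alpha>) * exp (1 - \<alpha> / 2))"

definition Ccop :: "real \<Rightarrow> real \<Rightarrow> real \<Rightarrow> real \<Rightarrow> real" where
  "Ccop \<alpha> \<delta> u v = u * v + \<delta> * (1 - exp (\<alpha> * (u - u\<^sup>2))) * (1 - exp (\<alpha> * (v - v\<^sup>2)))"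

definition spearman_rho :: "(real \<Rightarrow> real \<Rightarrow> real) \<Rightarrow> real" where
  "spearman_rho C = 12 * integral {0..1} (\<lambda>u. integral {0..1} (\<lambda>v. C u v)) - 3"

definition gini_gamma :: "(real \<Rightarrow> real \<Rightarrow> real) \<Rightarrow> real" where
  "gini_gamma C = 4 * (integral {0..1} (\<lambda>u. C u (1 - u)) - integral {0..1} (\<lambda>u. u - C u u))"

end

theory Submission
  imports Defs
begin

text \<open>The copula is the independence copula perturbed by \<open>\<delta> \<phi>(u) \<phi>(v)\<close> with
  \<open>\<phi>(u) = 1 - exp (\<alpha> (u - u\<^sup>2))\<close>. For such a perturbation the double integral
  factorises, giving \<open>\<rho> = 12 \<delta> (\<integral>\<phi>)\<^sup>2\<close>, and the symmetry \<open>\<phi>(1 - u) = \<phi>(u)\<close>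
  makes the polynomial parts of Gini's gamma cancel, giving \<open>\<gamma> = 8 \<delta> \<integral>\<phi>\<^sup>2\<close>.
  Everything thus reduces to \<open>\<integral>\<^sub>0\<^sup>1 exp (a (u - u\<^sup>2)) du\<close> for \<open>a = \<alpha>, 2\<alpha>\<close>;
  completing the square, \<open>a (u - u\<^sup>2) = a/4 - a (u - 1/2)\<^sup>2\<close>, turns this into an
  integral of a Gaussian (\<open>a > 0\<close>) or of its reciprocal (\<open>a < 0\<close>) over a symmetric
  interval, i.e. into an \<open>erf\<close> or an \<open>erfi\<close> value. The bound on \<open>\<bar>\<delta>\<bar>\<close> only makes
  the function a copula; the formulas hold for every \<open>\<delta>\<close>.\<close>

lemma spearman_rho_product_perturbation:
  fixes f :: "real \<Rightarrow> real"
  assumes "f integrable_on {0..1}"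
  shows "spearman_rho (\<lambda>u v. u * v + \<delta> * f u * f v) = 12 * \<delta> * (integral {0..1} f)\<^sup>2"
proof -
  define I where "I = integral {0..1} f"
  have f: "(f has_integral I) {0..1}"
    unfolding I_def using assms by (rule integrable_integral)
  have id: "((\<lambda>x. x) has_integral 1 / 2) {0..1::real}"
    using ident_has_integral[of 0 1] by simp
  have "((\<lambda>v. u * v + \<delta> * f u * f v) has_integral u / 2 + \<delta> * f u * I) {0..1}" for u
    using has_integral_add[OF has_integral_mult_right[OF id, of u]
        has_integral_mult_right[OF f, of "\<delta> * f u"]]
    by (simp add: mult.assoc)
  then have inner: "integral {0..1} (\<lambda>v. u * v + \<delta> * f u * f v) = u / 2 + \<delta> * f u * I" for u
    by (rule integral_unique)
  have "((\<lambda>u. u / 2 + \<delta> * f u * I) has_integral 1 / 4 + \<delta> * I\<^sup>2) {0..1}"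
    using has_integral_add[OF has_integral_mult_right[OF id, of "1/2"]
        has_integral_mult_left[OF has_integral_mult_right[OF f, of \<delta>], of I]]
    by (simp add: power2_eq_square mult.assoc)
  then show ?thesis
    by (simp add: spearman_rho_def inner integral_unique I_def)
qed

lemma gini_gamma_product_perturbation:
  fixes f :: "real \<Rightarrow> real"
  assumes "(\<lambda>u. (f u)\<^sup>2) integrable_on {0..1}" and sym: "\<And>u. f (1 - u) = f u"
  shows "gini_gamma (\<lambda>u v. u * v + \<delta> * f u * f v) = 8 * \<delta> * integral {0..1} (\<lambda>u. (f u)\<^sup>2)"
proof -
  define K where "K = integral {0..1} (\<lambda>u. (f u)\<^sup>2)"
  have f2: "((\<lambda>u. (f u)\<^sup>2) has_integral K) {0..1}"
    unfolding K_def using assms(1) by (rule integrable_integral)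
  have "(\<lambda>u::real. u * (1 - u)) integrable_on {0..1}"
    by (intro integrable_continuous_interval continuous_intros)
  then obtain G where g: "((\<lambda>u::real. u * (1 - u)) has_integral G) {0..1}"
    by (auto simp: integrable_on_def)
  have "((\<lambda>u. u * (1 - u) + \<delta> * f u * f (1 - u)) has_integral G + \<delta> * K) {0..1}"
    using has_integral_add[OF g has_integral_mult_right[OF f2, of \<delta>]]
    by (simp add: sym power2_eq_square mult.assoc)
  moreover have "((\<lambda>u. u - (u * u + \<delta> * f u * f u)) has_integral G - \<delta> * K) {0..1}"
    using has_integral_diff[OF g has_integral_mult_right[OF f2, of \<delta>]]
    by (simp add: power2_eq_square algebra_simps)
  ultimately show ?thesis
    by (simp add: gini_gamma_def integral_unique K_def)
qed

lemma integral_even_rescaled_unit_interval: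
  fixes f :: "real \<Rightarrow> real"
  assumes s: "s > 0" and cont: "continuous_on {-(s/2)..s/2} f" and even: "\<And>z. f (-z) = f z"
  shows "integral {0..1} (\<lambda>u. f (s * (u - 1/2))) = 2 / s * integral {0..s/2} f"
proof -
  have "((\<lambda>u. s *\<^sub>R f (s * (u - 1/2)))
      has_integral integral {s * (0 - 1/2)..s * (1 - 1/2)} f) {0..1}"
    by (rule has_integral_substitution[where c = "-(s/2)" and d = "s/2"])
       (use s cont in \<open>auto intro!: derivative_eq_intros simp: algebra_simps\<close>)
  then have "((\<lambda>u. s * f (s * (u - 1/2))) has_integral integral {-(s/2)..s/2} f) {0..1}"
    by simp
  then have "integral {0..1} (\<lambda>u. s * f (s * (u - 1/2))) = integral {-(s/2)..s/2} f"
    by (rule integral_unique)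
  then have "s * integral {0..1} (\<lambda>u. f (s * (u - 1/2))) = integral {-(s/2)..s/2} f"
    by simp
  also have "\<dots> = integral {-(s/2)..0} f + integral {0..s/2} f"
    using s
    by (intro Henstock_Kurzweil_Integration.integral_combine[symmetric]
        integrable_continuous_interval cont) auto
  also have "integral {-(s/2)..0} f = integral {0..s/2} f"
    using Henstock_Kurzweil_Integration.integral_reflect_real[of "s/2" 0 f] by (simp add: even)
  finally show ?thesis
    using s by (simp add: field_simps)
qed

lemma integral_exp_neg_square_eq_erf:
  "0 \<le> t \<Longrightarrow> integral {0..t} (\<lambda>z. exp (- z\<^sup>2)) = sqrt pi / 2 * erf t"
  by (simp add: erf_def)

lemma integral_exp_square_eq_erfi:
  "0 \<le> t \<Longrightarrow> integral {0..t} (\<lambda>z. exp (z\<^sup>2)) = sqrt pi / 2 * erfi t"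
  by (simp add: erfi_def)

lemma integral_exp_parabola_erf:
  fixes a :: real
  assumes "a > 0"
  shows "integral {0..1} (\<lambda>u. exp (a * (u - u\<^sup>2))) = sqrt (pi / a) * exp (a / 4) * erf (sqrt a / 2)"
proof -
  define s where "s = sqrt a"
  have s: "s > 0" "s * s = a"
    using assms by (simp_all add: s_def)
  have "exp (a * (u - u\<^sup>2)) = exp (a / 4) * exp (- (s * (u - 1/2))\<^sup>2)" for u
  proof -
    have "a * (u - u\<^sup>2) = a / 4 + - (s * (u - 1/2))\<^sup>2"
      unfolding power_mult_distrib by (simp add: power2_eq_square s(2) algebra_simps)
    then show ?thesis by (metis exp_add)
  qed
  then have "integral {0..1} (\<lambda>u. exp (a * (u - u\<^sup>2)))
      = exp (a / 4) * (2 / s * integral {0..s/2} (\<lambda>z. exp (- z\<^sup>2)))"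
    using s integral_even_rescaled_unit_interval[of s "\<lambda>z. exp (- z\<^sup>2)"]
    by (simp add: continuous_intros)
  also have "\<dots> = sqrt (pi / a) * exp (a / 4) * erf (s / 2)"
    using s by (simp add: integral_exp_neg_square_eq_erf real_sqrt_divide flip: s_def)
  finally show ?thesis
    by (simp add: s_def)
qed

lemma integral_exp_parabola_erfi:
  fixes a :: real
  assumes "a < 0"
  shows "integral {0..1} (\<lambda>u. exp (a * (u - u\<^sup>2)))
    = sqrt (pi / \<bar>a\<bar>) * exp (a / 4) * erfi (sqrt \<bar>a\<bar> / 2)"
proof -
  define s where "s = sqrt \<bar>a\<bar>"
  have s: "s > 0" "s * s = - a"
    using assms by (simp_all add: s_def)
  have "exp (a * (u - u\<^sup>2)) = exp (a / 4) * exp ((s * (u - 1/2))\<^sup>2)" for u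
  proof -
    have "a * (u - u\<^sup>2) = a / 4 + (s * (u - 1/2))\<^sup>2"
      unfolding power_mult_distrib by (simp add: power2_eq_square s(2) algebra_simps)
    then show ?thesis by (metis exp_add)
  qed
  then have "integral {0..1} (\<lambda>u. exp (a * (u - u\<^sup>2)))
      = exp (a / 4) * (2 / s * integral {0..s/2} (\<lambda>z. exp (z\<^sup>2)))"
    using s integral_even_rescaled_unit_interval[of s "\<lambda>z. exp (z\<^sup>2)"]
    by (simp add: continuous_intros)
  also have "\<dots> = sqrt (pi / \<bar>a\<bar>) * exp (a / 4) * erfi (s / 2)"
    using s by (simp add: integral_exp_square_eq_erfi real_sqrt_divide flip: s_def)
  finally show ?thesis
    by (simp add: s_def)
qed

lemma spearman_rho_Ccop:
  "spearman_rho (Ccop \<alpha> \<delta>) = 12 * \<delta> * (1 - integral {0..1} (\<lambda>u. exp (\<alpha> * (u - u\<^sup>2))))\<^sup>2"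
proof -
  define e where "e = (\<lambda>u::real. exp (\<alpha> * (u - u\<^sup>2)))"
  have "(e has_integral integral {0..1} e) {0..1}"
    unfolding e_def by (intro integrable_integral integrable_continuous_interval continuous_intros)
  then have "((\<lambda>u. 1 - e u) has_integral 1 - integral {0..1} e) {0..1}"
    using has_integral_diff[OF has_integral_const_real[of 1 0 1]] by simp
  moreover have "Ccop \<alpha> \<delta> = (\<lambda>u v. u * v + \<delta> * (1 - e u) * (1 - e v))"
    by (intro ext) (simp add: Ccop_def e_def)
  ultimately show ?thesis
    using spearman_rho_product_perturbation[of "\<lambda>u. 1 - e u" \<delta>]
    by (auto simp: integral_unique e_def)
qed

lemma gini_gamma_Ccop:
  "gini_gamma (Ccop \<alpha> \<delta>) = 8 * \<delta> * (1 - 2 * integral {0..1} (\<lambda>u. exp (\<alpha> * (u - u\<^sup>2)))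
      + integral {0..1} (\<lambda>u. exp (2 * \<alpha> * (u - u\<^sup>2))))"
proof -
  define e where "e a = (\<lambda>u::real. exp (a * (u - u\<^sup>2)))" for a
  have e: "(e a has_integral integral {0..1} (e a)) {0..1}" for a
    unfolding e_def by (intro integrable_integral integrable_continuous_interval continuous_intros)
  have "(1 - e \<alpha> u)\<^sup>2 = 1 - 2 * e \<alpha> u + e (2 * \<alpha>) u" for u
    by (simp add: e_def power2_eq_square exp_add[symmetric] algebra_simps)
  then have "((\<lambda>u. (1 - e \<alpha> u)\<^sup>2) has_integral
      1 - 2 * integral {0..1} (e \<alpha>) + integral {0..1} (e (2 * \<alpha>))) {0..1}"
    using has_integral_add[OF has_integral_diff[OF has_integral_const_real[of 1 0 1]
        has_integral_mult_right[OF e, of 2]] e]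
    by simp
  moreover have "1 - e \<alpha> (1 - u) = 1 - e \<alpha> u" for u
    by (simp add: e_def power2_eq_square algebra_simps)
  moreover have "Ccop \<alpha> \<delta> = (\<lambda>u v. u * v + \<delta> * (1 - e \<alpha> u) * (1 - e \<alpha> v))"
    by (intro ext) (simp add: Ccop_def e_def)
  ultimately show ?thesis
    using gini_gamma_product_perturbation[of "\<lambda>u. 1 - e \<alpha> u" \<delta>]
    by (auto simp: integral_unique e_def)
qed

lemma sqrt_double_div_2: "sqrt (2 * x) / 2 = sqrt (x / 2)"
  using real_sqrt_divide[of "2 * x" 4] by (simp add: real_sqrt_four)

theorem proposition1:
  fixes \<alpha> \<delta> :: real
  assumes "\<alpha> \<noteq> 0" and "\<bar>\<delta>\<bar> \<le> delta_star \<alpha>"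
  shows "(spearman_rho (Ccop \<alpha> \<delta>) =
           (if \<alpha> < 0
            then 12 * \<delta> * (1 - sqrt (pi / \<bar>\<alpha>\<bar>) * exp (\<alpha> / 4) * erfi (sqrt \<bar>\<alpha>\<bar> / 2))\<^sup>2
            else 12 * \<delta> * (1 - sqrt (pi / \<alpha>) * exp (\<alpha> / 4) * erf (sqrt \<alpha> / 2))\<^sup>2)) \<and>
         (gini_gamma (Ccop \<alpha> \<delta>) =
           (if \<alpha> < 0
            then 8 * \<delta> * (1 - 2 * sqrt (pi / \<bar>\<alpha>\<bar>) * exp (\<alpha> / 4) * erfi (sqrt \<bar>\<alpha>\<bar> / 2)
                   + sqrt (pi / (2 * \<bar>\<alpha>\<bar>)) * exp (\<alpha> / 2) * erfi (sqrt (\<bar>\<alpha>\<bar> / 2)))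
            else 8 * \<delta> * (1 - 2 * sqrt (pi / \<alpha>) * exp (\<alpha> / 4) * erf (sqrt \<alpha> / 2)
                   + sqrt (pi / (2 * \<alpha>)) * exp (\<alpha> / 2) * erf (sqrt (\<alpha> / 2)))))"
proof (cases "\<alpha> < 0")
  case True
  then show ?thesis
    using integral_exp_parabola_erfi[of \<alpha>] integral_exp_parabola_erfi[of "2 * \<alpha>"]
      sqrt_double_div_2[of "- \<alpha>"]
    by (simp add: spearman_rho_Ccop gini_gamma_Ccop abs_mult)
next
  case False
  with assms(1) have "\<alpha> > 0" by simp
  then show ?thesis
    using integral_exp_parabola_erf[of \<alpha>] integral_exp_parabola_erf[of "2 * \<alpha>"]
    by (simp add: spearman_rho_Ccop gini_gamma_Ccop sqrt_double_div_2)
qed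

end
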